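(* Let $E$ be a finite-dimensional real vector space, let $C$ be a nonzero nondegenerate cone of $E$, and let $u$ be an endomorphism of $E$ with $u(C)\subseteq C$. Put $v=\mathrm{id}_E+u$ and $C'=\bigcap_{n\geq 0}v^n(C)$. Then $C'$ is a nonzero nondegenerate cone contained in $C$, $u(C')\subseteq C'$, and $v(C')=C'$.
   Context: A cone of a finite-dimensional real vector space $E$ is a closed subset $C\subseteq E$ that contains $0$ and is stable under addition of vectors and under multiplication by positive scalars. A cone $C$ is nondegenerate if $C\cap(-C)=\{0\}$, and nonzero if it contains a nonzero vector. *)

theory Defs
  imports "HOL-Analysis.Analysis"
begin

definition closed_cone :: "'a::real_normed_vector set \<Rightarrow> bool" where
  "closed_cone C \<longleftrightarrow> closed C \<and> 0 \<in> C \<and> (\<forall>x\<in>C. \<forall>y\<in>C. x + y \<in> C)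
     \<and> (\<forall>t::real. t > 0 \<longrightarrow> (\<forall>x\<in>C. t *\<^sub>R x \<in> C))"

definition nondegenerate_cone :: "'a::real_vector set \<Rightarrow> bool" where
  "nondegenerate_cone C \<longleftrightarrow> C \<inter> uminus ` C = {0}"

definition nonzero_cone :: "'a::real_vector set \<Rightarrow> bool" where
  "nonzero_cone C \<longleftrightarrow> (\<exists>x\<in>C. x \<noteq> 0)"

end

theory Submission
  imports Defs
begin

text \<open>If \<open>x \<in> C\<close> and \<open>v x = 0\<close>, then \<open>-x = u x \<in> C\<close>, so \<open>x = 0\<close> by
  nondegeneracy: no power \<open>v\<^sup>n\<close> kills a nonzero vector of \<open>C\<close>. A linear map with this property
  on a closed cone is bounded below on it (compactness of the unit sphere), hence maps it onto a
  closed cone; so the \<open>v\<^sup>n(C)\<close> form a decreasing sequence of nonzero closed cones. Normalising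
  nonzero vectors of \<open>v\<^sup>n(C)\<close> gives a nested sequence of nonempty compact subsets of the unit
  sphere, whose common point is a nonzero vector of \<open>C'\<close>. Finally, for \<open>y \<in> C'\<close> the sets
  \<open>v\<^sup>n(C) \<inter> v\<^sup>-\<^sup>1(y)\<close> are nonempty, closed, decreasing and bounded (as \<open>v\<close> is bounded below on
  \<open>C\<close>), and a common point of them is a preimage of \<open>y\<close> in \<open>C'\<close>.\<close>

lemma linear_funpow:
  fixes f :: "'a::real_vector \<Rightarrow> 'a"
  assumes "linear f"
  shows "linear (f ^^ n)"
proof (induction n)
  case (Suc n)
  then show ?case using linear_compose[OF Suc assms] by (simp add: o_def)
qed (simp add: linear_iff)

lemma funpow_commute:
  fixes f g :: "'a \<Rightarrow> 'a"
  assumes "\<And>x. f (g x) = g (f x)"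
  shows "f ((g ^^ n) x) = (g ^^ n) (f x)"
  by (induction n) (simp_all add: assms)

lemma cone_norm_lower_bound:
  fixes C :: "'a::euclidean_space set" and L :: "'a \<Rightarrow> 'b::real_normed_vector"
  assumes "closed C" and scale: "\<And>x t. x \<in> C \<Longrightarrow> t > 0 \<Longrightarrow> t *\<^sub>R x \<in> C"
    and "linear L" and kernel: "\<And>x. x \<in> C \<Longrightarrow> L x = 0 \<Longrightarrow> x = 0"
  obtains m where "m > 0" and "\<And>x. x \<in> C \<Longrightarrow> m * norm x \<le> norm (L x)"
proof -
  let ?S = "C \<inter> sphere 0 1"
  have normalised: "(1 / norm x) *\<^sub>R x \<in> ?S" if "x \<in> C" "x \<noteq> 0" for x
    using scale[OF that(1), of "1 / norm x"] that by auto
  show thesis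
  proof (cases "?S = {}")
    case True
    then have "C \<subseteq> {0}" using normalised by blast
    then show thesis by (intro that[of 1]) auto
  next
    case False
    have "compact ?S" using \<open>closed C\<close> by (simp add: closed_Int_compact)
    moreover have "continuous_on ?S (\<lambda>x. norm (L x))"
      using \<open>linear L\<close> by (intro continuous_on_norm linear_continuous_on)
        (simp add: linear_conv_bounded_linear)
    ultimately obtain z where z: "z \<in> ?S" and z_min: "\<And>y. y \<in> ?S \<Longrightarrow> norm (L z) \<le> norm (L y)"
      using continuous_attains_inf[OF _ False] by blast
    show thesis
    proof (rule that)
      show "norm (L z) > 0" using z kernel by fastforce
    next
      fix x assume "x \<in> C"
      show "norm (L z) * norm x \<le> norm (L x)"
      proof (cases "x = 0")
        case False
        have "norm (L z) \<le> norm (L ((1 / norm x) *\<^sub>R x))"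
          using z_min normalised[OF \<open>x \<in> C\<close> False] by blast
        also have "\<dots> = norm (L x) / norm x"
          using linear_scale[OF \<open>linear L\<close>] by simp
        finally show ?thesis using False by (simp add: field_simps)
      qed simp
    qed
  qed
qed

lemma closed_linear_image_cone:
  fixes C :: "'a::euclidean_space set" and L :: "'a \<Rightarrow> 'b::real_normed_vector"
  assumes "closed C" and "\<And>x t. x \<in> C \<Longrightarrow> t > 0 \<Longrightarrow> t *\<^sub>R x \<in> C"
    and "linear L" and "\<And>x. x \<in> C \<Longrightarrow> L x = 0 \<Longrightarrow> x = 0"
  shows "closed (L ` C)"
proof -
  obtain m where "m > 0" and bound: "\<And>x. x \<in> C \<Longrightarrow> m * norm x \<le> norm (L x)"
    using cone_norm_lower_bound[OF assms] by blast
  have "y \<in> L ` C" if y: "y \<in> closure (L ` C)" for y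
  proof -
    define R where "R = (norm y + 1) / m"
    have near: "ball y 1 \<inter> L ` C \<subseteq> L ` (C \<inter> cball 0 R)"
    proof
      fix w assume "w \<in> ball y 1 \<inter> L ` C"
      then obtain x where x: "x \<in> C" "w = L x" "dist y (L x) < 1" by auto
      have "norm (L x) \<le> norm y + dist y (L x)"
        by (metis dist_commute dist_norm norm_triangle_sub)
      then have "m * norm x \<le> norm y + 1" using bound[OF x(1)] x(3) by linarith
      then have "norm x \<le> R" using \<open>m > 0\<close> by (simp add: R_def field_simps)
      then show "w \<in> L ` (C \<inter> cball 0 R)" using x by auto
    qed
    have "compact (L ` (C \<inter> cball 0 R))"
      using \<open>linear L\<close> \<open>closed C\<close>
      by (intro compact_continuous_image linear_continuous_on closed_Int_compact compact_cball)
        (simp_all add: linear_conv_bounded_linear)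
    then have "closed (L ` (C \<inter> cball 0 R))" by (rule compact_imp_closed)
    moreover have "y \<in> closure (ball y 1 \<inter> L ` C)"
      using y open_Int_closure_subset[of "ball y 1" "L ` C"] by auto
    ultimately have "y \<in> L ` (C \<inter> cball 0 R)" using near closure_minimal by blast
    then show ?thesis by blast
  qed
  then show ?thesis using closure_subset_eq by blast
qed

lemma closed_cone_linear_image:
  fixes C :: "'a::euclidean_space set" and L :: "'a \<Rightarrow> 'b::real_normed_vector"
  assumes "closed_cone C" and "linear L" and "\<And>x. x \<in> C \<Longrightarrow> L x = 0 \<Longrightarrow> x = 0"
  shows "closed_cone (L ` C)"
proof -
  have "closed (L ` C)"
    using assms by (intro closed_linear_image_cone) (auto simp: closed_cone_def)
  moreover have "0 \<in> L ` C"
    using assms linear_0[OF \<open>linear L\<close>] by (force simp: closed_cone_def)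
  moreover have "L x + L y \<in> L ` C" if "x \<in> C" "y \<in> C" for x y
    using assms that by (metis closed_cone_def image_eqI linear_add)
  moreover have "t *\<^sub>R L x \<in> L ` C" if "x \<in> C" "t > 0" for x t
    using assms that by (metis closed_cone_def image_eqI linear_scale)
  ultimately show ?thesis by (auto simp: closed_cone_def)
qed

lemma closed_cone_INT:
  "(\<And>n. closed_cone (V n)) \<Longrightarrow> closed_cone (\<Inter>n. V n)"
  unfolding closed_cone_def by auto

lemma nondegenerate_cone_subset:
  "nondegenerate_cone C \<Longrightarrow> D \<subseteq> C \<Longrightarrow> 0 \<in> D \<Longrightarrow> nondegenerate_cone D"
  unfolding nondegenerate_cone_def by force

lemma nonzero_cone_INT_decseq:
  fixes V :: "nat \<Rightarrow> 'a::euclidean_space set"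
  assumes "decseq V" and cone: "\<And>n. closed_cone (V n)" and nonzero: "\<And>n. nonzero_cone (V n)"
  shows "nonzero_cone (\<Inter>n. V n)"
proof -
  define K where "K n = V n \<inter> sphere 0 1" for n
  have "closed (K n)" for n
    using cone[of n] by (simp add: K_def closed_cone_def closed_Int)
  moreover have "K n \<noteq> {}" for n
  proof -
    obtain x where "x \<in> V n" "x \<noteq> 0" using nonzero by (auto simp: nonzero_cone_def)
    then have "(1 / norm x) *\<^sub>R x \<in> K n"
      using cone[of n] by (simp add: K_def closed_cone_def)
    then show ?thesis by blast
  qed
  moreover have "K n \<subseteq> K m" if "m \<le> n" for m n
    using \<open>decseq V\<close> that by (auto simp: K_def decseq_def)
  moreover have "bounded (K 0)" by (simp add: K_def bounded_Int)
  ultimately obtain a where "\<And>n. a \<in> K n" using bounded_closed_nest by metis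
  then have "a \<in> (\<Inter>n. V n)" and "a \<noteq> 0" by (auto simp: K_def)
  then show ?thesis unfolding nonzero_cone_def by blast
qed

lemma in_image_INT_decseq:
  fixes f :: "'a::heine_borel \<Rightarrow> 'b::t2_space" and V :: "nat \<Rightarrow> 'a set"
  assumes "continuous_on UNIV f" and "decseq V" and "\<And>n. closed (V n)"
    and "bounded (V 0 \<inter> f -` {y})" and "\<And>n. y \<in> f ` V n"
  shows "y \<in> f ` (\<Inter>n. V n)"
proof -
  define K where "K n = V n \<inter> f -` {y}" for n
  have "closed (f -` {y})"
    using \<open>continuous_on UNIV f\<close> closed_vimage closed_singleton by blast
  then have "closed (K n)" for n by (simp add: K_def closed_Int assms(3))
  moreover have "K n \<noteq> {}" for n using assms(5)[of n] by (auto simp: K_def)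
  moreover have "K n \<subseteq> K m" if "m \<le> n" for m n
    using \<open>decseq V\<close> that by (auto simp: K_def decseq_def)
  moreover have "bounded (K 0)" using assms(4) by (simp add: K_def)
  ultimately obtain a where "\<And>n. a \<in> K n" using bounded_closed_nest by metis
  then show ?thesis by (auto simp: K_def)
qed

lemma image_INT_funpow_image_subset:
  assumes "f ` C \<subseteq> C" and "\<And>x. f (g x) = g (f x)"
  shows "f ` (\<Inter>n. (g ^^ n) ` C) \<subseteq> (\<Inter>n. (g ^^ n) ` C)"
proof (intro subsetI INT_I)
  fix y n assume "y \<in> f ` (\<Inter>n. (g ^^ n) ` C)"
  then obtain x where "x \<in> (g ^^ n) ` C" and "y = f x" by blast
  then obtain a where "a \<in> C" and y: "y = f ((g ^^ n) a)" by blast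
  have "y = (g ^^ n) (f a)" unfolding y by (rule funpow_commute[of f g, OF assms(2)])
  moreover have "f a \<in> C" using assms(1) \<open>a \<in> C\<close> by blast
  ultimately show "y \<in> (g ^^ n) ` C" by blast
qed

locale cone_endomorphism =
  fixes C :: "'a::euclidean_space set" and u v :: "'a \<Rightarrow> 'a"
  assumes closed_cone_C: "closed_cone C" and nondegenerate_C: "nondegenerate_cone C"
    and linear_u: "linear u" and u_image: "u ` C \<subseteq> C"
    and v_def: "v = (\<lambda>x. x + u x)"
begin

lemma linear_v: "linear v"
  unfolding v_def using linear_add[OF linear_u] linear_scale[OF linear_u]
  by (intro linearI) (simp_all add: algebra_simps)

lemma u_v_commute: "u (v x) = v (u x)"
  unfolding v_def using linear_add[OF linear_u] by simp

lemma v_image: "v ` C \<subseteq> C"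
  using u_image closed_cone_C by (auto simp: v_def closed_cone_def)

lemma v_eq_0:
  assumes "x \<in> C" and "v x = 0"
  shows "x = 0"
proof -
  have "x = - u x" using \<open>v x = 0\<close> by (simp add: v_def add_eq_0_iff)
  then have "x \<in> C \<inter> uminus ` C" using u_image \<open>x \<in> C\<close> by blast
  then show ?thesis using nondegenerate_C unfolding nondegenerate_cone_def by blast
qed

lemma funpow_v_eq_0: "x \<in> C \<Longrightarrow> (v ^^ n) x = 0 \<Longrightarrow> x = 0"
proof (induction n arbitrary: x)
  case (Suc n)
  then have "v x \<in> C" using v_image by blast
  with Suc show ?case by (simp add: funpow_swap1 v_eq_0)
qed simp

lemma decseq_funpow_image: "decseq (\<lambda>n. (v ^^ n) ` C)"
proof (rule decseq_SucI)
  fix n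
  have "(v ^^ Suc n) ` C = (v ^^ n) ` (v ` C)" by (simp add: image_comp funpow_swap1 o_def)
  then show "(v ^^ Suc n) ` C \<subseteq> (v ^^ n) ` C" using v_image by auto
qed

lemma closed_cone_funpow_image: "closed_cone ((v ^^ n) ` C)"
  using closed_cone_C linear_funpow[OF linear_v] funpow_v_eq_0
  by (rule closed_cone_linear_image)

lemma nonzero_cone_funpow_image:
  assumes "nonzero_cone C"
  shows "nonzero_cone ((v ^^ n) ` C)"
proof -
  obtain x where "x \<in> C" "x \<noteq> 0" using assms by (auto simp: nonzero_cone_def)
  then have "(v ^^ n) x \<in> (v ^^ n) ` C" and "(v ^^ n) x \<noteq> 0"
    using funpow_v_eq_0 by blast+
  then show ?thesis unfolding nonzero_cone_def by blast
qed

lemma bounded_preimage_v: "bounded (C \<inter> v -` {y})"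
proof -
  have "closed C" and "\<And>x t. x \<in> C \<Longrightarrow> t > 0 \<Longrightarrow> t *\<^sub>R x \<in> C"
    using closed_cone_C by (simp_all add: closed_cone_def)
  then obtain m where "m > 0" and bound: "\<And>x. x \<in> C \<Longrightarrow> m * norm x \<le> norm (v x)"
    using cone_norm_lower_bound[OF _ _ linear_v v_eq_0] by blast
  have "norm x \<le> norm y / m" if "x \<in> C" "v x = y" for x
    using bound[OF that(1)] that(2) \<open>m > 0\<close> by (simp add: pos_le_divide_eq mult.commute)
  then have "C \<inter> v -` {y} \<subseteq> cball 0 (norm y / m)" by auto
  then show ?thesis using bounded_cball bounded_subset by blast
qed

lemma v_image_INT_funpow_image:
  "v ` (\<Inter>n. (v ^^ n) ` C) = (\<Inter>n. (v ^^ n) ` C)"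
proof
  show "v ` (\<Inter>n. (v ^^ n) ` C) \<subseteq> (\<Inter>n. (v ^^ n) ` C)"
    using v_image by (rule image_INT_funpow_image_subset) simp
  show "(\<Inter>n. (v ^^ n) ` C) \<subseteq> v ` (\<Inter>n. (v ^^ n) ` C)"
  proof
    fix y assume y: "y \<in> (\<Inter>n. (v ^^ n) ` C)"
    have "y \<in> v ` (v ^^ n) ` C" for n
      using y image_comp[of v "v ^^ n" C] by (metis INT_E UNIV_I funpow.simps(2))
    moreover have "continuous_on UNIV v"
      using linear_v by (simp add: linear_conv_bounded_linear linear_continuous_on)
    moreover have "closed ((v ^^ n) ` C)" for n
      using closed_cone_funpow_image by (simp add: closed_cone_def)
    moreover have "bounded ((v ^^ 0) ` C \<inter> v -` {y})"
      using bounded_preimage_v by simp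
    ultimately show "y \<in> v ` (\<Inter>n. (v ^^ n) ` C)"
      using decseq_funpow_image in_image_INT_decseq by metis
  qed
qed

end

theorem mainTheorem11:
  fixes C :: "'a::euclidean_space set" and u :: "'a \<Rightarrow> 'a"
  assumes "closed_cone C" and "nonzero_cone C" and "nondegenerate_cone C"
    and "linear u" and "u ` C \<subseteq> C"
  defines "v \<equiv> (\<lambda>x. x + u x)"
  defines "C' \<equiv> (\<Inter>n::nat. (v ^^ n) ` C)"
  shows "closed_cone C' \<and> nonzero_cone C' \<and> nondegenerate_cone C' \<and> C' \<subseteq> C
    \<and> u ` C' \<subseteq> C' \<and> v ` C' = C'"
proof -
  interpret cone_endomorphism C u v
    by (intro cone_endomorphism.intro assms(1,3,4,5)) (simp add: v_def)
  have "closed_cone C'"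
    unfolding C'_def using closed_cone_funpow_image by (rule closed_cone_INT)
  moreover have "nonzero_cone C'"
    unfolding C'_def using decseq_funpow_image closed_cone_funpow_image
      nonzero_cone_funpow_image[OF \<open>nonzero_cone C\<close>] by (rule nonzero_cone_INT_decseq)
  moreover have "C' \<subseteq> C"
    unfolding C'_def using INT_lower[of 0 UNIV "\<lambda>n. (v ^^ n) ` C"] by simp
  moreover have "nondegenerate_cone C'"
    using \<open>nondegenerate_cone C\<close> \<open>C' \<subseteq> C\<close>
  proof (rule nondegenerate_cone_subset)
    show "0 \<in> C'" using \<open>closed_cone C'\<close> by (simp add: closed_cone_def)
  qed
  moreover have "u ` C' \<subseteq> C'"
    unfolding C'_def using \<open>u ` C \<subseteq> C\<close> u_v_commute by (rule image_INT_funpow_image_subset)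
  moreover have "v ` C' = C'"
    unfolding C'_def by (rule v_image_INT_funpow_image)
  ultimately show ?thesis by blast
qed

end
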